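(* Let $\mathcal{A}$ be a $d$-regular, strongly $\chi$-colorable 2-complex with coloring $C$, let $\mathcal{G}=G_1\times\cdots\times G_\chi$ and $F_1,\dots,F_\chi$ as in the construction below, and suppose that $\mathcal{C}=HDZ^{-}[\mathcal{A},C,\mathcal{G},F_1,\dots,F_\chi]$ is a commutative triplet structure. Then $\mathcal{C}$ has $|\mathcal{G}|$ vertices, every vertex of $\mathcal{C}$ lies in exactly $3|\mathcal{A}(2)|$ triangles, and $\mathcal{C}$ is $2d$-regular.
   Context: For a 2-complex $X$, $X(1)$ is the set of 2-sets in triangles, $X(2)$ the set of triangles; $X$ is $d$-regular if each edge of $X(1)$ lies in exactly $d$ triangles. A coloring is strong if every triangle has three differently colored vertices. Construction: let $V^c=\{V^c_1,\dots,V^c_{K_c}\}$ be the vertices of color $c$ ($K_c$ even); $F_c\subseteq G_c$ with $|F_c|=K_c$, ordered $F^c_1,\dots,F^c_{K_c}$ with $(F^c_i)^{-1}=F^c_{i+K_c/2}$ (indices mod $K_c$) and no element of order 2; identify $F^c_i$ with the element of $\mathcal{G}$ equal to $F^c_i$ in coordinate $c$ and identity elsewhere; $\phi(V^c_i)=F^c_i$; $\mathcal{S}$ is the complex with triangles $\{\phi(a),\phi(b),\phi(e)\}$, $\{a,b,e\}\in\mathcal{A}(2)$; $HDZ^{-}[\mathcal{A},C,\mathcal{G},F_1,\dots,F_\chi]=\{\sigma\cdot g:\sigma\in\mathcal{S},g\in\mathcal{G}\}$ where $\sigma\cdot g=\{sg:s\in\sigma\}$. With $\mathcal{T}=\mathcal{S}(1)$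 and $\mathcal{T}_o$ the ordered pairs of elements of $\mathcal{T}$, this is a commutative triplet structure if: (0) $\{s,s^{-1}\}\notin\mathcal{T}$; (A) $\mathcal{S}$ is regular; (B) $ab=ba$ for $\{a,b\}\in\mathcal{T}$; (C) $\{a,b\}\in\mathcal{T}\iff\{a^{-1},b^{-1}\}\in\mathcal{T}$; (D) for $t\ne t'\in\mathcal{T}_o$, $t_1t_2^{-1}=t'_1(t'_2)^{-1}$ implies $t'_2=t_1^{-1}$, $t'_1=t_2^{-1}$; (E) the 1-skeleton of $\mathcal{S}$ is connected. *)

theory Defs
  imports "HOL-Algebra.Algebra"
begin

definition complex2 :: "'a set \<Rightarrow> 'a set set \<Rightarrow> bool" where
  "complex2 V X2 \<longleftrightarrow> finite V \<and> (\<forall>t\<in>X2. t \<subseteq> V \<and> card t = 3)"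

definition edges2 :: "'a set set \<Rightarrow> 'a set set" where
  "edges2 X2 = {e. card e = 2 \<and> (\<exists>t\<in>X2. e \<subseteq> t)}"

definition regular_cx :: "nat \<Rightarrow> 'a set set \<Rightarrow> bool" where
  "regular_cx d X2 \<longleftrightarrow> (\<forall>e\<in>edges2 X2. card {t\<in>X2. e \<subseteq> t} = d)"

definition strong_coloring :: "('a \<Rightarrow> nat) \<Rightarrow> nat \<Rightarrow> 'a set \<Rightarrow> 'a set set \<Rightarrow> bool" where
  "strong_coloring C chi V X2 \<longleftrightarrow> C ` V \<subseteq> {..<chi} \<and> (\<forall>t\<in>X2. card (C ` t) = 3)"

definition emb :: "(nat \<Rightarrow> 'g monoid) \<Rightarrow> nat \<Rightarrow> nat \<Rightarrow> 'g \<Rightarrow> (nat \<Rightarrow> 'g)" where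
  "emb G chi c x = (\<lambda>j\<in>{..<chi}. if j = c then x else \<one>\<^bsub>G j\<^esub>)"

definition hdz :: "('b, 'c) monoid_scheme \<Rightarrow> 'b set set \<Rightarrow> 'b set set" where
  "hdz GG S2 = {(\<lambda>s. s \<otimes>\<^bsub>GG\<^esub> g) ` \<sigma> | \<sigma> g. \<sigma> \<in> S2 \<and> g \<in> carrier GG}"

text \<open>Commutative triplet structure conditions (0),(A)-(E) for S (given by its
  triangles S2) inside the group GG, with T = S(1) and T_o the ordered pairs.\<close>
definition comm_triplet_structure :: "('b, 'c) monoid_scheme \<Rightarrow> 'b set set \<Rightarrow> bool" where
  "comm_triplet_structure GG S2 \<longleftrightarrow>
     (let T = edges2 S2; To = {(a, b). {a, b} \<in> T} in
       (\<forall>s\<in>carrier GG. {s, inv\<^bsub>GG\<^esub> s} \<notin> T) \<and>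
       (\<exists>k. regular_cx k S2) \<and>
       (\<forall>a b. {a, b} \<in> T \<longrightarrow> a \<otimes>\<^bsub>GG\<^esub> b = b \<otimes>\<^bsub>GG\<^esub> a) \<and>
       (\<forall>a\<in>carrier GG. \<forall>b\<in>carrier GG. {a, b} \<in> T \<longleftrightarrow> {inv\<^bsub>GG\<^esub> a, inv\<^bsub>GG\<^esub> b} \<in> T) \<and>
       (\<forall>t\<in>To. \<forall>t'\<in>To. t \<noteq> t' \<and>
           fst t \<otimes>\<^bsub>GG\<^esub> inv\<^bsub>GG\<^esub> (snd t) = fst t' \<otimes>\<^bsub>GG\<^esub> inv\<^bsub>GG\<^esub> (snd t')
           \<longrightarrow> snd t' = inv\<^bsub>GG\<^esub> (fst t) \<and> fst t' = inv\<^bsub>GG\<^esub> (snd t)) \<and>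
       (\<forall>x\<in>\<Union>S2. \<forall>y\<in>\<Union>S2. (x, y) \<in> To\<^sup>*))"

end

theory Submission
  imports Defs
begin

(* The triangles of HDZ^- are the right translates sigma g of the triangles sigma of S = phi(A),
   and condition (D) makes this parametrisation rigid: sigma g = sigma' g' forces sigma = sigma'
   and g = g'. Hence every group element is a vertex, and the triangles through a vertex x
   correspond to the flags (sigma, p) with p in sigma, via sigma (p^-1 x): there are 3 |A(2)| of
   them. The triangles through an edge {x, y} correspond to the pairs of an ordered edge (r, s) of
   S with r s^-1 = y x^-1 and a triangle of S containing it. By (B), (C) and (D) the ordered edges
   with a given quotient are exactly (r, s) and (s^-1, r^-1), which differ by (0), and each lies in
   d triangles of S because the injective labelling phi carries the d-regularity of A over to S. *)

lemma (in group) mult_inv_translate_right: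
  assumes "r \<in> carrier G" "s \<in> carrier G" "g \<in> carrier G"
  shows "(r \<otimes> g) \<otimes> inv (s \<otimes> g) = r \<otimes> inv s"
  using assms by (simp add: inv_mult_group m_assoc[symmetric]) (simp add: m_assoc)

lemma complex2_image:
  assumes "complex2 V X2" and "inj_on f V"
  shows "complex2 (f ` V) ((\<lambda>t. f ` t) ` X2)"
  using assms unfolding complex2_def by (auto simp: card_image inj_on_subset)

lemma card_image_triangles:
  assumes "\<forall>t\<in>X2. t \<subseteq> V" and "inj_on f V"
  shows "card ((\<lambda>t. f ` t) ` X2) = card X2"
  using assms by (intro card_image inj_on_subset[OF inj_on_image_Pow]) auto

lemma regular_cx_image:
  assumes inj: "inj_on f V" and sub: "\<forall>t\<in>X2. t \<subseteq> V" and reg: "regular_cx d X2"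
  shows "regular_cx d ((\<lambda>t. f ` t) ` X2)"
  unfolding regular_cx_def
proof
  fix e assume "e \<in> edges2 ((\<lambda>t. f ` t) ` X2)"
  then obtain t where "t \<in> X2" "card e = 2" "e \<subseteq> f ` t" unfolding edges2_def by auto
  then obtain e0 where "e0 \<subseteq> t" and e: "e = f ` e0" by (auto simp: subset_image_iff)
  have "e0 \<subseteq> V" using sub \<open>t \<in> X2\<close> \<open>e0 \<subseteq> t\<close> by blast
  then have "card e0 = 2" using \<open>card e = 2\<close> e inj_on_subset[OF inj] by (simp add: card_image)
  then have "e0 \<in> edges2 X2" unfolding edges2_def using \<open>e0 \<subseteq> t\<close> \<open>t \<in> X2\<close> by auto
  have image_subset_iff: "f ` e0 \<subseteq> f ` t' \<longleftrightarrow> e0 \<subseteq> t'" if "t' \<in> X2" for t'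
    using inj \<open>e0 \<subseteq> V\<close> sub that unfolding inj_on_def by blast
  have "{\<tau> \<in> (\<lambda>t. f ` t) ` X2. e \<subseteq> \<tau>} = (\<lambda>t. f ` t) ` {t' \<in> X2. e0 \<subseteq> t'}"
    unfolding e using image_subset_iff by blast
  also have "card \<dots> = card {t' \<in> X2. e0 \<subseteq> t'}"
    using card_image_triangles[OF _ inj] sub by simp
  also have "\<dots> = d" using reg \<open>e0 \<in> edges2 X2\<close> unfolding regular_cx_def by auto
  finally show "card {\<tau> \<in> (\<lambda>t. f ` t) ` X2. e \<subseteq> \<tau>} = d" .
qed

(* Conditions (0), (B), (C) and (D) of a commutative triplet structure. *)
locale triplet_structure = group GG for GG (structure) +
  fixes S2 :: "'a set set"
  assumes triangle_subset_carrier: "\<sigma> \<in> S2 \<Longrightarrow> \<sigma> \<subseteq> carrier GG"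
    and card_triangle: "\<sigma> \<in> S2 \<Longrightarrow> card \<sigma> = 3"
    and finite_triangles: "finite S2"
    and triangles_nonempty: "S2 \<noteq> {}"
    and inverse_pair_not_edge: "s \<in> carrier GG \<Longrightarrow> {s, inv s} \<notin> edges2 S2"
    and edge_commute: "{a, b} \<in> edges2 S2 \<Longrightarrow> a \<otimes> b = b \<otimes> a"
    and edge_inv: "{a, b} \<in> edges2 S2 \<Longrightarrow> {inv a, inv b} \<in> edges2 S2"
    and edge_quotient_unique: "{a, b} \<in> edges2 S2 \<Longrightarrow> {c, e} \<in> edges2 S2 \<Longrightarrow>
       (a, b) \<noteq> (c, e) \<Longrightarrow> a \<otimes> inv b = c \<otimes> inv e \<Longrightarrow> e = inv a \<and> c = inv b"

lemma triplet_structureI: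
  assumes "group GG" and "complex2 W S2" and "W \<subseteq> carrier GG" and "S2 \<noteq> {}"
    and cts: "comm_triplet_structure GG S2"
  shows "triplet_structure GG S2"
proof -
  note axioms = cts[unfolded comm_triplet_structure_def Let_def]
  have triangles: "\<sigma> \<subseteq> carrier GG" "card \<sigma> = 3" if "\<sigma> \<in> S2" for \<sigma>
    using assms(2,3) that unfolding complex2_def by blast+
  have edge_carrier: "a \<in> carrier GG" "b \<in> carrier GG" if "{a, b} \<in> edges2 S2" for a b
    using that triangles unfolding edges2_def by blast+
  show ?thesis
  proof (intro triplet_structure.intro triplet_structure_axioms.intro)
    show "group GG" "S2 \<noteq> {}" by (fact assms)+
    show "\<sigma> \<subseteq> carrier GG" "card \<sigma> = 3" if "\<sigma> \<in> S2" for \<sigma>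
      using triangles that by blast+
    show "finite S2"
      using assms(2) unfolding complex2_def by (metis Pow_iff finite_Pow_iff finite_subset subsetI)
    show "{s, inv\<^bsub>GG\<^esub> s} \<notin> edges2 S2" if "s \<in> carrier GG" for s
      using axioms that by blast
    show "a \<otimes>\<^bsub>GG\<^esub> b = b \<otimes>\<^bsub>GG\<^esub> a" if "{a, b} \<in> edges2 S2" for a b
      using axioms that by blast
    show "{inv\<^bsub>GG\<^esub> a, inv\<^bsub>GG\<^esub> b} \<in> edges2 S2" if "{a, b} \<in> edges2 S2" for a b
      using axioms that edge_carrier[OF that] by blast
    fix a b c e
    assume "{a, b} \<in> edges2 S2" "{c, e} \<in> edges2 S2" "(a, b) \<noteq> (c, e)"
      "a \<otimes>\<^bsub>GG\<^esub> inv\<^bsub>GG\<^esub> b = c \<otimes>\<^bsub>GG\<^esub> inv\<^bsub>GG\<^esub> e"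
    then show "e = inv\<^bsub>GG\<^esub> a \<and> c = inv\<^bsub>GG\<^esub> b"
      using axioms[THEN conjunct2, THEN conjunct2, THEN conjunct2, THEN conjunct2, THEN conjunct1]
      by (metis case_prod_conv fst_conv mem_Collect_eq snd_conv)
  qed
qed

context triplet_structure
begin

lemma edges2_pairI: "\<sigma> \<in> S2 \<Longrightarrow> a \<in> \<sigma> \<Longrightarrow> b \<in> \<sigma> \<Longrightarrow> a \<noteq> b \<Longrightarrow> {a, b} \<in> edges2 S2"
  unfolding edges2_def by auto

lemma finite_triangle: "\<sigma> \<in> S2 \<Longrightarrow> finite \<sigma>"
  using card_triangle by (metis card.infinite zero_neq_numeral)

lemma triangle_translate_eq_imp_one:
  assumes \<sigma>: "\<sigma> \<in> S2" and \<sigma>': "\<sigma>' \<in> S2" and h: "h \<in> carrier GG"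
    and eq: "\<sigma> = (\<lambda>s. s \<otimes> h) ` \<sigma>'"
  shows "h = \<one>"
proof (rule ccontr)
  assume "h \<noteq> \<one>"
  obtain p a a' where \<sigma>'_eq: "\<sigma>' = {p, a, a'}" and "p \<noteq> a" "a \<noteq> a'" "p \<noteq> a'"
    using card_triangle[OF \<sigma>'] card_3_iff by metis
  have carr: "p \<in> carrier GG" "a \<in> carrier GG" "a' \<in> carrier GG"
    using triangle_subset_carrier[OF \<sigma>'] \<sigma>'_eq by auto
  \<comment> \<open>(D) applies to the ordered edges (p, q) and (p h, q h), which share their quotient\<close>
  have swap: "q \<otimes> h = inv p" if q: "q \<in> {a, a'}" for q
  proof -
    have "q \<in> carrier GG" "q \<noteq> p" using q carr \<open>p \<noteq> a\<close> \<open>p \<noteq> a'\<close> by auto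
    have "{p, q} \<in> edges2 S2" using edges2_pairI[OF \<sigma>'] \<sigma>'_eq q \<open>q \<noteq> p\<close> by auto
    moreover have "{p \<otimes> h, q \<otimes> h} \<in> edges2 S2"
      using edges2_pairI[OF \<sigma>] eq \<sigma>'_eq q \<open>q \<noteq> p\<close> \<open>q \<in> carrier GG\<close> carr h by auto
    moreover have "(p, q) \<noteq> (p \<otimes> h, q \<otimes> h)" using \<open>h \<noteq> \<one>\<close> carr h by auto
    moreover have "p \<otimes> inv q = (p \<otimes> h) \<otimes> inv (q \<otimes> h)"
      using mult_inv_translate_right \<open>q \<in> carrier GG\<close> carr h by simp
    ultimately show ?thesis using edge_quotient_unique by blast
  qed
  then have "a \<otimes> h = a' \<otimes> h" by simp
  then show False using carr h \<open>a \<noteq> a'\<close> by simp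
qed

lemma triangle_translate_inject:
  assumes \<sigma>: "\<sigma> \<in> S2" and \<sigma>': "\<sigma>' \<in> S2" and g: "g \<in> carrier GG" and g': "g' \<in> carrier GG"
    and eq: "(\<lambda>s. s \<otimes> g) ` \<sigma> = (\<lambda>s. s \<otimes> g') ` \<sigma>'"
  shows "\<sigma> = \<sigma>' \<and> g = g'"
proof -
  have "\<sigma> = (\<lambda>s. s \<otimes> inv g) ` ((\<lambda>s. s \<otimes> g) ` \<sigma>)"
    using triangle_subset_carrier[OF \<sigma>] g by (force simp: image_image m_assoc)
  also have "\<dots> = (\<lambda>s. s \<otimes> (g' \<otimes> inv g)) ` \<sigma>'"
    unfolding eq image_image using triangle_subset_carrier[OF \<sigma>'] g g'
    by (intro image_cong) (auto simp: m_assoc)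
  finally have "g' \<otimes> inv g = \<one>" using triangle_translate_eq_imp_one[OF \<sigma> \<sigma>'] g g' by auto
  then have "g = g'" using g g' by (metis inv_closed inv_inv inv_equality)
  moreover have "inj_on (\<lambda>s. s \<otimes> g) (carrier GG)" using g by (auto simp: inj_on_def)
  ultimately show ?thesis
    using eq triangle_subset_carrier[OF \<sigma>] triangle_subset_carrier[OF \<sigma>'] by (metis inj_on_image_eq_iff)
qed

lemma Union_hdz: "\<Union>(hdz GG S2) = carrier GG"
proof
  show "\<Union>(hdz GG S2) \<subseteq> carrier GG" unfolding hdz_def using triangle_subset_carrier by auto
  show "carrier GG \<subseteq> \<Union>(hdz GG S2)"
  proof
    fix x assume x: "x \<in> carrier GG"
    obtain \<sigma> p where \<sigma>: "\<sigma> \<in> S2" and p: "p \<in> \<sigma>"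
      using triangles_nonempty card_triangle by (metis all_not_in_conv card.empty ex_in_conv zero_neq_numeral)
    have "p \<in> carrier GG" using triangle_subset_carrier \<sigma> p by auto
    then have "x \<in> (\<lambda>s. s \<otimes> (inv p \<otimes> x)) ` \<sigma>" using p x by (force simp: m_assoc[symmetric])
    moreover have "(\<lambda>s. s \<otimes> (inv p \<otimes> x)) ` \<sigma> \<in> hdz GG S2"
      unfolding hdz_def using \<sigma> \<open>p \<in> carrier GG\<close> x by blast
    ultimately show "x \<in> \<Union>(hdz GG S2)" by blast
  qed
qed

lemma triangles_at_vertex:
  assumes x: "x \<in> carrier GG"
  shows "{\<tau> \<in> hdz GG S2. x \<in> \<tau>} = (\<lambda>(\<sigma>, p). (\<lambda>s. s \<otimes> (inv p \<otimes> x)) ` \<sigma>) ` Sigma S2 (\<lambda>\<sigma>. \<sigma>)"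
proof (intro equalityI subsetI)
  fix \<tau> assume "\<tau> \<in> {\<tau> \<in> hdz GG S2. x \<in> \<tau>}"
  then obtain \<sigma> g p where \<tau>: "\<tau> = (\<lambda>s. s \<otimes> g) ` \<sigma>" and "\<sigma> \<in> S2" "g \<in> carrier GG" "p \<in> \<sigma>"
    and "x = p \<otimes> g"
    unfolding hdz_def by auto
  moreover have "p \<in> carrier GG" using triangle_subset_carrier \<open>\<sigma> \<in> S2\<close> \<open>p \<in> \<sigma>\<close> by auto
  ultimately have "g = inv p \<otimes> x" by (simp add: inv_solve_left)
  then show "\<tau> \<in> (\<lambda>(\<sigma>, p). (\<lambda>s. s \<otimes> (inv p \<otimes> x)) ` \<sigma>) ` Sigma S2 (\<lambda>\<sigma>. \<sigma>)"
    using \<tau> \<open>\<sigma> \<in> S2\<close> \<open>p \<in> \<sigma>\<close> by force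
next
  fix \<tau> assume "\<tau> \<in> (\<lambda>(\<sigma>, p). (\<lambda>s. s \<otimes> (inv p \<otimes> x)) ` \<sigma>) ` Sigma S2 (\<lambda>\<sigma>. \<sigma>)"
  then obtain \<sigma> p where \<tau>: "\<tau> = (\<lambda>s. s \<otimes> (inv p \<otimes> x)) ` \<sigma>" and "\<sigma> \<in> S2" "p \<in> \<sigma>" by auto
  moreover have p: "p \<in> carrier GG" using triangle_subset_carrier \<open>\<sigma> \<in> S2\<close> \<open>p \<in> \<sigma>\<close> by auto
  ultimately have "x \<in> \<tau>" using x by (force simp: m_assoc[symmetric])
  moreover have "\<tau> \<in> hdz GG S2" unfolding hdz_def using \<tau> \<open>\<sigma> \<in> S2\<close> p x by blast
  ultimately show "\<tau> \<in> {\<tau> \<in> hdz GG S2. x \<in> \<tau>}" by blast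
qed

lemma card_triangles_at_vertex:
  assumes x: "x \<in> carrier GG"
  shows "card {\<tau> \<in> hdz GG S2. x \<in> \<tau>} = 3 * card S2"
proof -
  have "inj_on (\<lambda>(\<sigma>, p). (\<lambda>s. s \<otimes> (inv p \<otimes> x)) ` \<sigma>) (Sigma S2 (\<lambda>\<sigma>. \<sigma>))"
  proof (rule inj_onI, clarsimp)
    fix \<sigma> p \<sigma>' p' assume "\<sigma> \<in> S2" "p \<in> \<sigma>" "\<sigma>' \<in> S2" "p' \<in> \<sigma>'"
      and eq: "(\<lambda>s. s \<otimes> (inv p \<otimes> x)) ` \<sigma> = (\<lambda>s. s \<otimes> (inv p' \<otimes> x)) ` \<sigma>'"
    moreover have "p \<in> carrier GG" "p' \<in> carrier GG"
      using triangle_subset_carrier \<open>\<sigma> \<in> S2\<close> \<open>p \<in> \<sigma>\<close> \<open>\<sigma>' \<in> S2\<close> \<open>p' \<in> \<sigma>'\<close> by auto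
    ultimately have "\<sigma> = \<sigma>'" "inv p \<otimes> x = inv p' \<otimes> x"
      using triangle_translate_inject[of \<sigma> \<sigma>' "inv p \<otimes> x" "inv p' \<otimes> x"] x by auto
    then show "\<sigma> = \<sigma>' \<and> p = p'"
      using \<open>p \<in> carrier GG\<close> \<open>p' \<in> carrier GG\<close> x by (metis inv_closed inv_inv r_cancel)
  qed
  then have "card {\<tau> \<in> hdz GG S2. x \<in> \<tau>} = card (Sigma S2 (\<lambda>\<sigma>. \<sigma>))"
    unfolding triangles_at_vertex[OF x] by (rule card_image)
  also have "\<dots> = (\<Sum>\<sigma>\<in>S2. card \<sigma>)" using finite_triangles finite_triangle by simp
  also have "\<dots> = 3 * card S2" using card_triangle by simp
  finally show ?thesis .
qed

definition edges_with_quotient :: "'a \<Rightarrow> ('a \<times> 'a) set" where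
  "edges_with_quotient w = {(r, s). {r, s} \<in> edges2 S2 \<and> r \<otimes> inv s = w}"

lemma edges_with_quotient_eq:
  assumes rs: "{r, s} \<in> edges2 S2"
  shows "edges_with_quotient (r \<otimes> inv s) = {(r, s), (inv s, inv r)}"
proof -
  have carr: "r \<in> carrier GG" "s \<in> carrier GG"
    using rs triangle_subset_carrier unfolding edges2_def by blast+
  have "{inv s, inv r} \<in> edges2 S2" using edge_inv[OF rs] by (simp add: insert_commute)
  moreover have "inv s \<otimes> inv (inv r) = r \<otimes> inv s"
  proof -
    have "inv s \<otimes> r = inv s \<otimes> (r \<otimes> s) \<otimes> inv s" using carr by (simp add: m_assoc)
    also have "\<dots> = r \<otimes> inv s" using edge_commute[OF rs] carr by (simp add: m_assoc[symmetric])
    finally show ?thesis using carr by simp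
  qed
  moreover have "p \<in> {(r, s), (inv s, inv r)}" if p: "p \<in> edges_with_quotient (r \<otimes> inv s)" for p
  proof (cases "p = (r, s)")
    case False
    obtain a b where "p = (a, b)" "{a, b} \<in> edges2 S2" "a \<otimes> inv b = r \<otimes> inv s"
      using p unfolding edges_with_quotient_def by auto
    then show ?thesis using edge_quotient_unique[OF rs, of a b] False by auto
  qed simp
  ultimately show ?thesis using rs unfolding edges_with_quotient_def by blast
qed

lemma card_edges_with_quotient:
  assumes rs: "{r, s} \<in> edges2 S2"
  shows "card (edges_with_quotient (r \<otimes> inv s)) = 2"
proof -
  have "s \<in> carrier GG" using rs triangle_subset_carrier unfolding edges2_def by blast
  then have "r \<noteq> inv s" using inverse_pair_not_edge rs by (metis insert_commute)
  then show ?thesis unfolding edges_with_quotient_eq[OF rs] by simp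
qed

lemma triangles_through_edge:
  assumes x: "x \<in> carrier GG" and y: "y \<in> carrier GG" and "x \<noteq> y"
  shows "{\<tau> \<in> hdz GG S2. {x, y} \<subseteq> \<tau>} =
    (\<lambda>((r, s), \<sigma>). (\<lambda>z. z \<otimes> (inv s \<otimes> x)) ` \<sigma>) `
      Sigma (edges_with_quotient (y \<otimes> inv x)) (\<lambda>(r, s). {\<sigma> \<in> S2. {r, s} \<subseteq> \<sigma>})"
    (is "_ = ?f ` ?P")
proof (intro equalityI subsetI)
  fix \<tau> assume "\<tau> \<in> {\<tau> \<in> hdz GG S2. {x, y} \<subseteq> \<tau>}"
  then obtain \<sigma> g r s where \<tau>: "\<tau> = (\<lambda>z. z \<otimes> g) ` \<sigma>" and "\<sigma> \<in> S2" "g \<in> carrier GG"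
    and "s \<in> \<sigma>" "x = s \<otimes> g" "r \<in> \<sigma>" "y = r \<otimes> g"
    unfolding hdz_def by auto
  moreover have "s \<in> carrier GG" "r \<in> carrier GG"
    using triangle_subset_carrier \<open>\<sigma> \<in> S2\<close> \<open>s \<in> \<sigma>\<close> \<open>r \<in> \<sigma>\<close> by auto
  ultimately have "g = inv s \<otimes> x" and "r \<otimes> inv s = y \<otimes> inv x"
    by (simp_all add: inv_solve_left mult_inv_translate_right)
  moreover have "{r, s} \<in> edges2 S2"
    using edges2_pairI \<open>\<sigma> \<in> S2\<close> \<open>s \<in> \<sigma>\<close> \<open>r \<in> \<sigma>\<close> \<open>x = s \<otimes> g\<close> \<open>y = r \<otimes> g\<close> \<open>x \<noteq> y\<close>
    by blast
  ultimately have "((r, s), \<sigma>) \<in> ?P" and "\<tau> = ?f ((r, s), \<sigma>)"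
    using \<tau> \<open>\<sigma> \<in> S2\<close> \<open>s \<in> \<sigma>\<close> \<open>r \<in> \<sigma>\<close> unfolding edges_with_quotient_def by auto
  then show "\<tau> \<in> ?f ` ?P" by blast
next
  fix \<tau> assume "\<tau> \<in> ?f ` ?P"
  then obtain r s \<sigma> where \<tau>: "\<tau> = (\<lambda>z. z \<otimes> (inv s \<otimes> x)) ` \<sigma>" and "\<sigma> \<in> S2"
    and "r \<in> \<sigma>" "s \<in> \<sigma>" and quot: "r \<otimes> inv s = y \<otimes> inv x"
    unfolding edges_with_quotient_def by auto
  moreover have "s \<in> carrier GG" "r \<in> carrier GG"
    using triangle_subset_carrier \<open>\<sigma> \<in> S2\<close> \<open>s \<in> \<sigma>\<close> \<open>r \<in> \<sigma>\<close> by auto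
  moreover have "y = r \<otimes> (inv s \<otimes> x)"
    using quot x y \<open>s \<in> carrier GG\<close> \<open>r \<in> carrier GG\<close> by (simp add: m_assoc[symmetric]) (simp add: m_assoc)
  ultimately have "{x, y} \<subseteq> \<tau>" using x by (force simp: m_assoc[symmetric])
  moreover have "\<tau> \<in> hdz GG S2"
    unfolding hdz_def using \<tau> \<open>\<sigma> \<in> S2\<close> \<open>s \<in> carrier GG\<close> x by blast
  ultimately show "\<tau> \<in> {\<tau> \<in> hdz GG S2. {x, y} \<subseteq> \<tau>}" by blast
qed

lemma card_triangles_through_edge:
  assumes reg: "regular_cx d S2" and rs: "{r, s} \<in> edges2 S2"
    and x: "x \<in> carrier GG" and y: "y \<in> carrier GG" and "x \<noteq> y"
    and quot: "y \<otimes> inv x = r \<otimes> inv s"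
  shows "card {\<tau> \<in> hdz GG S2. {x, y} \<subseteq> \<tau>} = 2 * d"
proof -
  let ?Q = "edges_with_quotient (y \<otimes> inv x)"
  let ?B = "\<lambda>(r, s). {\<sigma> \<in> S2. {r, s} \<subseteq> \<sigma>}"
  have "inj_on (\<lambda>((r, s), \<sigma>). (\<lambda>z. z \<otimes> (inv s \<otimes> x)) ` \<sigma>) (Sigma ?Q ?B)"
  proof (rule inj_onI, clarsimp)
    fix r s \<sigma> r' s' \<sigma>'
    assume "(r, s) \<in> ?Q" "\<sigma> \<in> S2" "r \<in> \<sigma>" "s \<in> \<sigma>" "(r', s') \<in> ?Q" "\<sigma>' \<in> S2" "r' \<in> \<sigma>'" "s' \<in> \<sigma>'"
      and eq: "(\<lambda>z. z \<otimes> (inv s \<otimes> x)) ` \<sigma> = (\<lambda>z. z \<otimes> (inv s' \<otimes> x)) ` \<sigma>'"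
    moreover have carr: "r \<in> carrier GG" "s \<in> carrier GG" "r' \<in> carrier GG" "s' \<in> carrier GG"
      using triangle_subset_carrier \<open>\<sigma> \<in> S2\<close> \<open>\<sigma>' \<in> S2\<close> \<open>r \<in> \<sigma>\<close> \<open>s \<in> \<sigma>\<close> \<open>r' \<in> \<sigma>'\<close> \<open>s' \<in> \<sigma>'\<close>
      by auto
    ultimately have "\<sigma> = \<sigma>'" "inv s \<otimes> x = inv s' \<otimes> x"
      using triangle_translate_inject[of \<sigma> \<sigma>' "inv s \<otimes> x" "inv s' \<otimes> x"] x by auto
    then have "s = s'" using carr x by (metis inv_closed inv_inv r_cancel)
    moreover have "r \<otimes> inv s = r' \<otimes> inv s'"
      using \<open>(r, s) \<in> ?Q\<close> \<open>(r', s') \<in> ?Q\<close> unfolding edges_with_quotient_def by auto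
    ultimately show "r = r' \<and> s = s' \<and> \<sigma> = \<sigma>'" using carr \<open>\<sigma> = \<sigma>'\<close> by (metis inv_closed r_cancel)
  qed
  then have "card {\<tau> \<in> hdz GG S2. {x, y} \<subseteq> \<tau>} = card (Sigma ?Q ?B)"
    unfolding triangles_through_edge[OF x y \<open>x \<noteq> y\<close>] by (rule card_image)
  also have "\<dots> = (\<Sum>p\<in>?Q. card (?B p))"
    using finite_triangles by (simp add: quot edges_with_quotient_eq[OF rs])
  also have "\<dots> = (\<Sum>p\<in>?Q. d)"
    using reg unfolding regular_cx_def edges_with_quotient_def by (intro sum.cong) auto
  also have "\<dots> = 2 * d" using card_edges_with_quotient[OF rs] quot by simp
  finally show ?thesis .
qed

lemma regular_cx_hdz:
  assumes "regular_cx d S2"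
  shows "regular_cx (2 * d) (hdz GG S2)"
  unfolding regular_cx_def
proof
  fix e assume "e \<in> edges2 (hdz GG S2)"
  then obtain x y \<sigma> g where e: "e = {x, y}" "x \<noteq> y" and "\<sigma> \<in> S2" "g \<in> carrier GG"
    and "e \<subseteq> (\<lambda>z. z \<otimes> g) ` \<sigma>"
    unfolding edges2_def hdz_def by (auto simp: card_2_iff)
  then obtain r s where "s \<in> \<sigma>" "r \<in> \<sigma>" "x = s \<otimes> g" "y = r \<otimes> g" by auto
  moreover have "s \<in> carrier GG" "r \<in> carrier GG"
    using triangle_subset_carrier \<open>\<sigma> \<in> S2\<close> \<open>s \<in> \<sigma>\<close> \<open>r \<in> \<sigma>\<close> by auto
  moreover have "{r, s} \<in> edges2 S2"
    using edges2_pairI \<open>\<sigma> \<in> S2\<close> calculation(1-4) \<open>x \<noteq> y\<close> by blast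
  ultimately show "card {\<tau> \<in> hdz GG S2. e \<subseteq> \<tau>} = 2 * d"
    using card_triangles_through_edge[OF assms] \<open>g \<in> carrier GG\<close> e
    by (simp add: mult_inv_translate_right)
qed

end

lemma half_shift_inverse_imp_ne_one:
  fixes K :: nat
  assumes "group H" and "even K" and "i < K"
    and "inj_on f {..<K}" and "inv\<^bsub>H\<^esub> (f i) = f ((i + K div 2) mod K)"
  shows "f i \<noteq> \<one>\<^bsub>H\<^esub>"
proof
  assume "f i = \<one>\<^bsub>H\<^esub>"
  then have "f ((i + K div 2) mod K) = f i"
    using assms(1,5) by (simp add: group.is_monoid monoid.inv_one)
  then have "(i + K div 2) mod K = i"
    using assms(3,4) by (auto dest: inj_onD)
  then show False
    using assms(2,3) by (auto elim!: evenE simp: mod_if split: if_splits)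
qed

lemma emb_inject:
  assumes "emb G chi c x = emb G chi c' x'" and "c < chi" and "c' < chi" and "x \<noteq> \<one>\<^bsub>G c\<^esub>"
  shows "c = c' \<and> x = x'"
proof -
  have "emb G chi c x c = emb G chi c' x' c" using assms(1) by simp
  then show ?thesis using assms(2-4) unfolding emb_def by (auto split: if_splits)
qed

lemma inj_on_emb_labelling:
  assumes "C ` V \<subseteq> {..<chi}"
    and "\<And>c. c < chi \<Longrightarrow> bij_betw ix {v\<in>V. C v = c} {..<K c}"
    and "\<And>c. c < chi \<Longrightarrow> inj_on (F c) {..<K c}"
    and "\<And>c i. c < chi \<Longrightarrow> i < K c \<Longrightarrow> F c i \<noteq> \<one>\<^bsub>G c\<^esub>"
  shows "inj_on (\<lambda>v. emb G chi (C v) (F (C v) (ix v))) V"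
proof (rule inj_onI)
  fix u v assume u: "u \<in> V" and v: "v \<in> V"
    and eq: "emb G chi (C u) (F (C u) (ix u)) = emb G chi (C v) (F (C v) (ix v))"
  have ix_lt: "ix w < K (C w)" if "w \<in> V" for w
    using assms(1,2) that unfolding bij_betw_def by blast
  have same_colour: "C u = C v" and F_eq: "F (C u) (ix u) = F (C v) (ix v)"
    using emb_inject[OF eq] assms(1,4) ix_lt u v by auto
  have "ix u = ix v"
  proof (rule inj_onD)
    show "inj_on (F (C u)) {..<K (C u)}" using assms(1,3) u by blast
    show "F (C u) (ix u) = F (C u) (ix v)" using F_eq same_colour by simp
  qed (use ix_lt[OF u] ix_lt[OF v] same_colour in auto)
  then show "u = v"
    using assms(1) assms(2)[of "C u"] u v same_colour unfolding bij_betw_def inj_on_def by auto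
qed

lemma emb_labelling_image_subset:
  assumes "\<And>c. c < chi \<Longrightarrow> group (G c)" and "C ` V \<subseteq> {..<chi}"
    and "\<And>c. c < chi \<Longrightarrow> bij_betw ix {v\<in>V. C v = c} {..<K c}"
    and "\<And>c. c < chi \<Longrightarrow> F c ` {..<K c} \<subseteq> carrier (G c)"
  shows "(\<lambda>v. emb G chi (C v) (F (C v) (ix v))) ` V \<subseteq> carrier (product_group {..<chi} G)"
proof clarify
  fix v assume "v \<in> V"
  then have "C v < chi" and "ix v < K (C v)" using assms(2,3) unfolding bij_betw_def by blast+
  then have "F (C v) (ix v) \<in> carrier (G (C v))" using assms(4) by blast
  then show "emb G chi (C v) (F (C v) (ix v)) \<in> carrier (product_group {..<chi} G)"
    using assms(1) \<open>C v < chi\<close> by (auto simp: emb_def group.is_monoid monoid.one_closed)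
qed

theorem mainTheorem10:
  fixes V :: "'v set" and A2 :: "'v set set" and C :: "'v \<Rightarrow> nat"
    and chi d :: nat and G :: "nat \<Rightarrow> 'g monoid"
    and K :: "nat \<Rightarrow> nat" and ix :: "'v \<Rightarrow> nat" and F :: "nat \<Rightarrow> nat \<Rightarrow> 'g"
  assumes cx: "complex2 V A2" and ne: "A2 \<noteq> {}"
    and reg: "regular_cx d A2"
    and col: "strong_coloring C chi V A2"
    and grp: "\<And>c. c < chi \<Longrightarrow> group (G c)"
    and K_def: "\<And>c. c < chi \<Longrightarrow> K c = card {v\<in>V. C v = c}"
    and K_even: "\<And>c. c < chi \<Longrightarrow> even (K c)"
    and ix: "\<And>c. c < chi \<Longrightarrow> bij_betw ix {v\<in>V. C v = c} {..<K c}"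
    and F_inj: "\<And>c. c < chi \<Longrightarrow> inj_on (F c) {..<K c}"
    and F_sub: "\<And>c. c < chi \<Longrightarrow> F c ` {..<K c} \<subseteq> carrier (G c)"
    and F_inv: "\<And>c i. c < chi \<Longrightarrow> i < K c \<Longrightarrow>
                  inv\<^bsub>G c\<^esub> (F c i) = F c ((i + K c div 2) mod K c)"
    and F_no2: "\<And>c x. c < chi \<Longrightarrow> x \<in> F c ` {..<K c} \<Longrightarrow> group.ord (G c) x \<noteq> 2"
    and cts: "comm_triplet_structure (product_group {..<chi} G)
                ((\<lambda>t. (\<lambda>v. emb G chi (C v) (F (C v) (ix v))) ` t) ` A2)"
  shows "card (\<Union>(hdz (product_group {..<chi} G)
                  ((\<lambda>t. (\<lambda>v. emb G chi (C v) (F (C v) (ix v))) ` t) ` A2)))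
           = card (carrier (product_group {..<chi} G))
      \<and> (\<forall>x\<in>\<Union>(hdz (product_group {..<chi} G)
                  ((\<lambda>t. (\<lambda>v. emb G chi (C v) (F (C v) (ix v))) ` t) ` A2)).
            card {\<tau> \<in> hdz (product_group {..<chi} G)
                  ((\<lambda>t. (\<lambda>v. emb G chi (C v) (F (C v) (ix v))) ` t) ` A2). x \<in> \<tau>}
            = 3 * card A2)
      \<and> regular_cx (2 * d) (hdz (product_group {..<chi} G)
                  ((\<lambda>t. (\<lambda>v. emb G chi (C v) (F (C v) (ix v))) ` t) ` A2))"
proof -
  define P where "P = product_group {..<chi} G"
  define \<phi> where "\<phi> = (\<lambda>v. emb G chi (C v) (F (C v) (ix v)))"
  define S2 where "S2 = (\<lambda>t. \<phi> ` t) ` A2"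
  have C_V: "C ` V \<subseteq> {..<chi}" using col unfolding strong_coloring_def by blast
  have A2_V: "\<forall>t\<in>A2. t \<subseteq> V" using cx unfolding complex2_def by blast
  have \<phi>_inj: "inj_on \<phi> V"
    unfolding \<phi>_def
  proof (rule inj_on_emb_labelling[OF C_V ix F_inj])
    fix c i assume c: "c < chi" and i: "i < K c"
    show "F c i \<noteq> \<one>\<^bsub>G c\<^esub>"
      by (rule half_shift_inverse_imp_ne_one[OF grp[OF c] K_even[OF c] i F_inj[OF c] F_inv[OF c i]])
  qed
  have "triplet_structure P S2"
  proof (rule triplet_structureI)
    show "group P" unfolding P_def by (rule product_group) (use grp in auto)
    show "complex2 (\<phi> ` V) S2" unfolding S2_def using cx \<phi>_inj by (rule complex2_image)
    show "\<phi> ` V \<subseteq> carrier P"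
      unfolding \<phi>_def P_def using grp C_V ix F_sub by (rule emb_labelling_image_subset)
    show "S2 \<noteq> {}" unfolding S2_def using ne by simp
    show "comm_triplet_structure P S2" unfolding P_def S2_def \<phi>_def by (fact cts)
  qed
  then interpret triplet_structure P S2 .
  have "card S2 = card A2" unfolding S2_def using A2_V \<phi>_inj by (rule card_image_triangles)
  moreover have "regular_cx d S2" unfolding S2_def using \<phi>_inj A2_V reg by (rule regular_cx_image)
  ultimately show ?thesis
    using Union_hdz card_triangles_at_vertex regular_cx_hdz unfolding P_def S2_def \<phi>_def by auto
qed

end
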